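(* Let $(X,\mu)$ be any measure space, let $N\geq 2$ be an integer, and let $f_1,\dots,f_N$ be non-negative measurable functions on $X$ with $0<\sum_{j=1}^N \|f_j\|_p^p<\infty$. Define $$\Gamma_p(f_1,\dots,f_N) := \frac{\left\Vert \binom{N}{2}^{-1}\sum_{1\le i< j\le N} f_if_j\right\Vert_{p/2}^{p/2}}{\frac1N \sum_{j=1}^N \|f_j\|_p^p}$$ and $$r(N,p) = \frac{2N}{2N+(p-2)(2N-1)}.$$ Then for all $p\in(2,\infty)$, $$\Big\|\sum_{j=1}^N f_j\Big\|_p^p \leq \Big[\,1 + (N-1)\,\Gamma_p(f_1,\dots,f_N)^{r(N,p)}\Big]^{p-1}\sum_{j=1}^N \|f_j\|_p^p,$$ and for all $p\in(1,2)$ the reverse inequality ($\geq$) holds.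
   Context: For any real $q\neq 0$ and measurable $f$, $\|f\|_q := \left(\int |f|^q\,d\mu\right)^{1/q}$ (this notation is used even when $q<1$, where it is not a norm). One has $0\le\Gamma_p\le 1$. *)

theory Defs
  imports "HOL-Analysis.Analysis"
begin

definition qpow_norm :: "'a measure \<Rightarrow> real \<Rightarrow> ('a \<Rightarrow> real) \<Rightarrow> ennreal" where
  "qpow_norm M q g = (\<integral>\<^sup>+ x. ennreal (\<bar>g x\<bar> powr q) \<partial>M)"

definition Gamma_p :: "'a measure \<Rightarrow> real \<Rightarrow> nat \<Rightarrow> (nat \<Rightarrow> 'a \<Rightarrow> real) \<Rightarrow> real" where
  "Gamma_p M p N f =
     enn2real (qpow_norm M (p/2)
        (\<lambda>x. inverse (real (N choose 2)) * (\<Sum>i\<in>{1..N}. \<Sum>j\<in>{i<..N}. f i x * f j x)))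
     / ((1 / real N) * enn2real (\<Sum>j\<in>{1..N}. qpow_norm M p (f j)))"

definition r_exp :: "nat \<Rightarrow> real \<Rightarrow> real" where
  "r_exp N p = 2 * real N / (2 * real N + (p - 2) * (2 * real N - 1))"

end

theory Submission
  imports Defs
begin

(* For nonnegative a_1, ..., a_N let s = sum a_i, S = sum a_i^p, T = sum a_i^2 and let P be the
   mean of the products a_i a_j, i < j, so that s^2 = T + N (N - 1) P.  Hoelder's inequality
   interpolates T between s and S; combined with Young's inequality this gives the pointwise bound
   s^p <= S * Phi (gamma), where gamma = N P^(p/2) / S lies in [0, 1] and
   Phi (gamma) = (1 + (N - 1) gamma^r)^(p - 1).  Gamma_p is the S-weighted mean of gamma and Phi is
   concave on [0, 1] for p > 2, so integrating the pointwise bound and applying Jensen's inequality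
   with weight S proves the theorem.  For 1 < p < 2 every inequality reverses and Phi is convex. *)

section \<open>Hoelder-type inequalities for finite sums\<close>

lemma Holder_inequality_sum:
  fixes u v :: "'i \<Rightarrow> real"
  assumes fin: "finite I" and u: "\<And>i. i \<in> I \<Longrightarrow> u i \<ge> 0" and v: "\<And>i. i \<in> I \<Longrightarrow> v i \<ge> 0"
    and \<alpha>: "\<alpha> > 0" and \<beta>: "\<beta> > 0" and \<alpha>\<beta>: "\<alpha> + \<beta> = 1"
  shows "(\<Sum>i\<in>I. u i powr \<alpha> * v i powr \<beta>) \<le> (\<Sum>i\<in>I. u i) powr \<alpha> * (\<Sum>i\<in>I. v i) powr \<beta>"
proof (cases "(\<Sum>i\<in>I. u i) = 0 \<or> (\<Sum>i\<in>I. v i) = 0")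
  case True
  then have "\<forall>i\<in>I. u i = 0 \<or> v i = 0" using sum_nonneg_eq_0_iff[OF fin] u v by blast
  then show ?thesis by (simp add: sum.neutral)
next
  case False
  define U where "U = (\<Sum>i\<in>I. u i)"
  define V where "V = (\<Sum>i\<in>I. v i)"
  have U: "U > 0" using False u sum_nonneg[of I u] unfolding U_def by force
  have V: "V > 0" using False v sum_nonneg[of I v] unfolding V_def by force
  have Young: "(u i / U) powr \<alpha> * (v i / V) powr \<beta> \<le> \<alpha> * (u i / U) + \<beta> * (v i / V)"
    if i: "i \<in> I" for i
    using Youngs_inequality_0[of \<alpha> \<beta> "u i / U" "v i / V"] u[OF i] v[OF i] U V \<alpha> \<beta> \<alpha>\<beta>
    by (cases "u i = 0 \<or> v i = 0") auto
  have "(\<Sum>i\<in>I. u i powr \<alpha> * v i powr \<beta>) / (U powr \<alpha> * V powr \<beta>)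
      = (\<Sum>i\<in>I. (u i / U) powr \<alpha> * (v i / V) powr \<beta>)"
    using U V u v by (simp add: powr_divide sum_divide_distrib)
  also have "\<dots> \<le> (\<Sum>i\<in>I. \<alpha> * (u i / U) + \<beta> * (v i / V))"
    by (rule sum_mono) (rule Young)
  also have "\<dots> = 1"
    using U V \<alpha>\<beta> by (simp add: sum.distrib flip: sum_distrib_left sum_divide_distrib U_def V_def)
  finally show ?thesis using U V by (simp add: divide_le_eq U_def V_def)
qed

lemma sum_powr_le_powr_sum:
  fixes a :: "'i \<Rightarrow> real"
  assumes "finite I" and a: "\<And>i. i \<in> I \<Longrightarrow> a i \<ge> 0" and p: "p \<ge> 1"
  shows "(\<Sum>i\<in>I. a i powr p) \<le> (\<Sum>i\<in>I. a i) powr p"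
proof -
  define s where "s = (\<Sum>i\<in>I. a i)"
  have s: "s \<ge> 0" unfolding s_def by (intro sum_nonneg a)
  have "a i powr p \<le> a i * s powr (p - 1)" if i: "i \<in> I" for i
  proof (cases "a i = 0")
    case False
    then have "a i > 0" using a[OF i] by simp
    moreover have "a i \<le> s" unfolding s_def using i a \<open>finite I\<close> by (intro member_le_sum) auto
    ultimately have "a i * a i powr (p - 1) \<le> a i * s powr (p - 1)"
      using p by (intro mult_left_mono powr_mono2) auto
    then show ?thesis using \<open>a i > 0\<close> by (simp add: powr_mult_base)
  qed simp
  then have "(\<Sum>i\<in>I. a i powr p) \<le> (\<Sum>i\<in>I. a i * s powr (p - 1))" by (rule sum_mono)
  also have "\<dots> = s powr p" using s by (simp add: powr_mult_base flip: sum_distrib_right s_def)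
  finally show ?thesis unfolding s_def .
qed

lemma powr_sum_le_card_powr_sum:
  fixes a :: "'i \<Rightarrow> real"
  assumes "finite I" and a: "\<And>i. i \<in> I \<Longrightarrow> a i \<ge> 0" and p: "p > 1"
  shows "(\<Sum>i\<in>I. a i) powr p \<le> real (card I) powr (p - 1) * (\<Sum>i\<in>I. a i powr p)"
proof -
  have "(\<Sum>i\<in>I. a i) = (\<Sum>i\<in>I. (a i powr p) powr (1 / p) * 1 powr (1 - 1 / p))"
    using p a by (intro sum.cong) (auto simp: powr_powr)
  also have "\<dots> \<le> (\<Sum>i\<in>I. a i powr p) powr (1 / p) * real (card I) powr (1 - 1 / p)"
    using Holder_inequality_sum[of I "\<lambda>i. a i powr p" "\<lambda>_. 1" "1 / p" "1 - 1 / p"] assms by simp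
  finally have "(\<Sum>i\<in>I. a i) powr p
      \<le> ((\<Sum>i\<in>I. a i powr p) powr (1 / p) * real (card I) powr (1 - 1 / p)) powr p"
    using p a by (intro powr_mono2) (auto intro: sum_nonneg)
  also have "\<dots> = real (card I) powr (p - 1) * (\<Sum>i\<in>I. a i powr p)"
    using p by (simp add: powr_mult powr_powr sum_nonneg algebra_simps)
  finally show ?thesis .
qed

lemma sum_squares_powr_le_interpolation:
  fixes a :: "'i \<Rightarrow> real"
  assumes "finite I" and a: "\<And>i. i \<in> I \<Longrightarrow> a i \<ge> 0" and p: "p > 2"
  shows "(\<Sum>i\<in>I. (a i)\<^sup>2) powr (p - 1) \<le> (\<Sum>i\<in>I. a i) powr (p - 2) * (\<Sum>i\<in>I. a i powr p)"
proof -
  have "a i powr ((p - 2) / (p - 1)) * (a i powr p) powr (1 / (p - 1)) = (a i)\<^sup>2" if "i \<in> I" for i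
  proof (cases "a i = 0")
    case False
    have "(p - 2) / (p - 1) + p * (1 / (p - 1)) = 2" using p by (simp add: divide_simps)
    then have "a i powr ((p - 2) / (p - 1)) * (a i powr p) powr (1 / (p - 1)) = a i powr 2"
      by (simp only: powr_powr flip: powr_add)
    then show ?thesis using False a[OF that] by (simp add: powr_numeral)
  qed simp
  moreover have "(p - 2) / (p - 1) + 1 / (p - 1) = 1" using p by (simp add: field_simps)
  ultimately have "(\<Sum>i\<in>I. (a i)\<^sup>2)
      \<le> (\<Sum>i\<in>I. a i) powr ((p - 2) / (p - 1)) * (\<Sum>i\<in>I. a i powr p) powr (1 / (p - 1))"
    using Holder_inequality_sum[of I a "\<lambda>i. a i powr p" "(p - 2) / (p - 1)" "1 / (p - 1)"] assms
    by simp
  then have "(\<Sum>i\<in>I. (a i)\<^sup>2) powr (p - 1)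
      \<le> ((\<Sum>i\<in>I. a i) powr ((p - 2) / (p - 1)) * (\<Sum>i\<in>I. a i powr p) powr (1 / (p - 1))) powr (p - 1)"
    using p by (intro powr_mono2) (auto intro: sum_nonneg)
  also have "\<dots> = (\<Sum>i\<in>I. a i) powr (p - 2) * (\<Sum>i\<in>I. a i powr p)"
    using p a by (simp add: powr_mult powr_powr sum_nonneg)
  finally show ?thesis .
qed

lemma sum_powr_le_interpolation:
  fixes a :: "'i \<Rightarrow> real"
  assumes "finite I" and a: "\<And>i. i \<in> I \<Longrightarrow> a i \<ge> 0" and p: "1 < p" "p < 2"
  shows "(\<Sum>i\<in>I. a i) powr (p - 2) * (\<Sum>i\<in>I. a i powr p) \<le> (\<Sum>i\<in>I. (a i)\<^sup>2) powr (p - 1)"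
proof (cases "(\<Sum>i\<in>I. a i) = 0")
  case False
  then have s: "(\<Sum>i\<in>I. a i) > 0" using a by (simp add: order.not_eq_order_implies_strict sum_nonneg)
  have "a i powr (2 - p) * ((a i)\<^sup>2) powr (p - 1) = a i powr p" if "i \<in> I" for i
  proof (cases "a i = 0")
    case False
    then have "a i powr (2 - p) * ((a i)\<^sup>2) powr (p - 1) = a i powr ((2 - p) + 2 * (p - 1))"
      using a[OF that] by (simp only: powr_powr powr_add flip: powr_numeral)
    then show ?thesis by simp
  qed (use p in simp)
  then have "(\<Sum>i\<in>I. a i powr p) \<le> (\<Sum>i\<in>I. a i) powr (2 - p) * (\<Sum>i\<in>I. (a i)\<^sup>2) powr (p - 1)"
    using Holder_inequality_sum[of I a "\<lambda>i. (a i)\<^sup>2" "2 - p" "p - 1"] assms by simp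
  then have "(\<Sum>i\<in>I. a i) powr (p - 2) * (\<Sum>i\<in>I. a i powr p)
      \<le> (\<Sum>i\<in>I. a i) powr (p - 2) * (\<Sum>i\<in>I. a i) powr (2 - p) * (\<Sum>i\<in>I. (a i)\<^sup>2) powr (p - 1)"
    by (simp add: mult_left_mono mult.assoc)
  also have "\<dots> = (\<Sum>i\<in>I. (a i)\<^sup>2) powr (p - 1)"
    using s by (simp flip: powr_add)
  finally show ?thesis .
qed simp

section \<open>The mean of the pairwise products\<close>

definition pair_mean :: "nat \<Rightarrow> (nat \<Rightarrow> real) \<Rightarrow> real" where
  "pair_mean N a = inverse (real (N choose 2)) * (\<Sum>i\<in>{1..N}. \<Sum>j\<in>{i<..N}. a i * a j)"

lemma square_sum_eq_sum_squares_pairs: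
  fixes a :: "nat \<Rightarrow> real"
  shows "(\<Sum>i\<in>{1..N}. a i)\<^sup>2 = (\<Sum>i\<in>{1..N}. (a i)\<^sup>2) + 2 * (\<Sum>i\<in>{1..N}. \<Sum>j\<in>{i<..N}. a i * a j)"
proof (induction N)
  case (Suc n)
  have "(\<Sum>i\<in>{1..Suc n}. \<Sum>j\<in>{i<..Suc n}. a i * a j) = (\<Sum>i\<in>{1..n}. \<Sum>j\<in>{i<..Suc n}. a i * a j)"
    by (simp add: sum.atLeast1_atMost_eq)
  also have "\<dots> = (\<Sum>i\<in>{1..n}. (\<Sum>j\<in>{i<..n}. a i * a j) + a i * a (Suc n))"
  proof (rule sum.cong[OF refl])
    fix i assume "i \<in> {1..n}"
    then have "{i<..Suc n} = insert (Suc n) {i<..n}" by auto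
    then show "(\<Sum>j\<in>{i<..Suc n}. a i * a j) = (\<Sum>j\<in>{i<..n}. a i * a j) + a i * a (Suc n)" by simp
  qed
  finally show ?case
    using Suc.IH
    by (simp add: sum.distrib power2_eq_square algebra_simps sum_distrib_left sum_distrib_right)
qed simp

lemma real_choose_two: "real (N choose 2) = real N * (real N - 1) / 2"
proof -
  have "2 * (N choose 2) = N * (N - 1)" by (cases N) (auto simp: choose_two)
  then have "2 * real (N choose 2) = real N * real (N - 1)" by (metis of_nat_mult of_nat_numeral)
  then show ?thesis by (cases N) auto
qed

lemma square_sum_eq_pair_mean:
  fixes a :: "nat \<Rightarrow> real"
  shows "(\<Sum>i\<in>{1..N}. a i)\<^sup>2 = (\<Sum>i\<in>{1..N}. (a i)\<^sup>2) + real N * (real N - 1) * pair_mean N a"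
proof (cases "N \<ge> 2")
  case True
  then show ?thesis
    unfolding square_sum_eq_sum_squares_pairs pair_mean_def real_choose_two
    by (simp add: field_simps)
next
  case False
  then have "N = 0 \<or> N = 1" by auto
  then show ?thesis by (auto simp: power2_eq_square)
qed

lemma pair_mean_nonneg:
  assumes "\<And>i. i \<in> {1..N} \<Longrightarrow> a i \<ge> 0"
  shows "pair_mean N a \<ge> 0"
  unfolding pair_mean_def using assms by (intro mult_nonneg_nonneg sum_nonneg) auto

lemma pair_mean_le_square_mean:
  assumes "N \<ge> 2"
  shows "pair_mean N a \<le> ((\<Sum>i\<in>{1..N}. a i) / real N)\<^sup>2"
proof -
  define s where "s = (\<Sum>i\<in>{1..N}. a i)"
  define T where "T = (\<Sum>i\<in>{1..N}. (a i)\<^sup>2)"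
  have "s\<^sup>2 = (\<Sum>i\<in>{1..N}. a i * 1)\<^sup>2" unfolding s_def by simp
  also have "\<dots> \<le> real N * T"
    using Cauchy_Schwarz_ineq_sum[of a "\<lambda>_. 1" "{1..N}"] unfolding T_def by (simp add: mult.commute)
  finally have Cauchy_Schwarz: "s\<^sup>2 \<le> real N * T" .
  have "real N * (real N - 1) * pair_mean N a = s\<^sup>2 - T"
    using square_sum_eq_pair_mean[of a N] unfolding s_def T_def by simp
  then have "real N * (real N * (real N - 1) * pair_mean N a) = real N * s\<^sup>2 - real N * T"
    by (simp add: right_diff_distrib)
  also have "\<dots> \<le> (real N - 1) * s\<^sup>2"
    using Cauchy_Schwarz by (simp add: algebra_simps)
  finally have "(real N - 1) * ((real N)\<^sup>2 * pair_mean N a) \<le> (real N - 1) * s\<^sup>2"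
    by (simp add: power2_eq_square algebra_simps)
  then have "(real N)\<^sup>2 * pair_mean N a \<le> s\<^sup>2" using assms by simp
  then show ?thesis using assms unfolding s_def by (simp add: power_divide field_simps)
qed

lemma pair_mean_powr_le_sum_powr:
  assumes N: "N \<ge> 2" and a: "\<And>i. i \<in> {1..N} \<Longrightarrow> a i \<ge> 0" and p: "p > 1"
  shows "real N * pair_mean N a powr (p / 2) \<le> (\<Sum>i\<in>{1..N}. a i powr p)"
proof -
  define s where "s = (\<Sum>i\<in>{1..N}. a i)"
  have s: "s \<ge> 0" unfolding s_def using a by (intro sum_nonneg) auto
  have "pair_mean N a powr (p / 2) \<le> ((s / real N)\<^sup>2) powr (p / 2)"
    using pair_mean_le_square_mean[OF N, of a] pair_mean_nonneg[OF a] p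
    unfolding s_def by (intro powr_mono2) auto
  also have "\<dots> = s powr p / real N powr p"
    using s N by (simp add: powr_powr powr_divide flip: powr_numeral)
  finally have "real N * pair_mean N a powr (p / 2) \<le> real N * (s powr p / real N powr p)"
    using N by (intro mult_left_mono) auto
  also have "\<dots> \<le> real N * (real N powr (p - 1) * (\<Sum>i\<in>{1..N}. a i powr p) / real N powr p)"
    using powr_sum_le_card_powr_sum[of "{1..N}" a p] a p N
    unfolding s_def by (intro mult_left_mono divide_right_mono) auto
  also have "\<dots> = (\<Sum>i\<in>{1..N}. a i powr p)"
    using N by (simp add: powr_diff)
  finally show ?thesis .
qed

section \<open>The function Phi\<close>

definition Phi :: "nat \<Rightarrow> real \<Rightarrow> real \<Rightarrow> real" where
  "Phi N p \<gamma> = (1 + (real N - 1) * \<gamma> powr r_exp N p) powr (p - 1)"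

definition Phi' :: "nat \<Rightarrow> real \<Rightarrow> real \<Rightarrow> real" where
  "Phi' N p \<gamma> = (p - 1) * (real N - 1) * r_exp N p * \<gamma> powr (r_exp N p - 1)
      * (1 + (real N - 1) * \<gamma> powr r_exp N p) powr (p - 2)"

lemma r_exp_denominator_pos:
  assumes "N \<ge> 2" "p > 1"
  shows "2 * real N + (p - 2) * (2 * real N - 1) > 0"
proof (cases "p \<ge> 2")
  case False
  have "(2 - p) * (2 * real N - 1) < 1 * (2 * real N - 1)"
    using assms False by (intro mult_strict_right_mono) auto
  then show ?thesis by (simp add: algebra_simps)
qed (use assms in \<open>simp add: add_pos_nonneg\<close>)

lemma r_exp_pos: "N \<ge> 2 \<Longrightarrow> p > 1 \<Longrightarrow> r_exp N p > 0"
  using r_exp_denominator_pos unfolding r_exp_def by simp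

lemma inverse_r_exp:
  assumes "N \<ge> 2" "p > 1"
  shows "1 / r_exp N p = p / 2 + (p / 2 - 1) * ((real N - 1) / real N)"
  using assms r_exp_denominator_pos[OF assms] unfolding r_exp_def by (simp add: field_simps)

lemma has_real_derivative_Phi:
  assumes "N \<ge> 2" "\<gamma> > 0"
  shows "(Phi N p has_real_derivative Phi' N p \<gamma>) (at \<gamma>)"
proof -
  have "1 + (real N - 1) * \<gamma> powr r_exp N p > 0" using assms by (simp add: add_pos_nonneg)
  then show ?thesis unfolding Phi_def[abs_def] Phi'_def
    by (auto intro!: derivative_eq_intros simp: assms)
qed

lemma continuous_on_Phi:
  assumes "N \<ge> 2" "p > 1"
  shows "continuous_on {0..} (Phi N p)"
proof -
  have "continuous_on {0..} (\<lambda>\<gamma>::real. \<gamma> powr r_exp N p)"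
    using r_exp_pos[OF assms] by (intro continuous_on_powr') (auto intro: continuous_intros)
  moreover have "1 + (real N - 1) * \<gamma> powr r_exp N p \<noteq> 0" for \<gamma> :: real
  proof -
    have "(real N - 1) * \<gamma> powr r_exp N p \<ge> 0" using assms by simp
    then show ?thesis by linarith
  qed
  ultimately show ?thesis
    unfolding Phi_def[abs_def] by (intro continuous_on_powr) (auto intro!: continuous_intros)
qed

lemma powr_add_powr_antimono:
  fixes a b c x y :: real
  assumes ab: "a \<le> b" "0 \<le> b" and c: "0 \<le> c" and abc: "a + c * b \<le> 0"
    and xy: "0 < x" "x \<le> y" "y \<le> 1"
  shows "y powr a + c * y powr b \<le> x powr a + c * x powr b"
proof (rule DERIV_nonpos_imp_nonincreasing[of x y "\<lambda>t. t powr a + c * t powr b"])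
  fix t assume "x \<le> t" "t \<le> y"
  then have t: "0 < t" "t \<le> 1" using xy by auto
  have "t powr (b - a) \<le> 1" using t ab powr_mono2[of "b - a" t 1] by simp
  then have "a + c * b * t powr (b - a) \<le> 0"
    using ab c abc mult_left_le[of "t powr (b - a)" "c * b"] by simp
  then have "t powr (a - 1) * (a + c * b * t powr (b - a)) \<le> 0"
    by (intro mult_nonneg_nonpos) auto
  moreover have "a * t powr (a - 1) + c * (b * t powr (b - 1))
      = t powr (a - 1) * (a + c * b * t powr (b - a))"
    using t by (simp add: algebra_simps flip: powr_add)
  moreover have "((\<lambda>t. t powr a + c * t powr b) has_real_derivative
      a * t powr (a - 1) + c * (b * t powr (b - 1))) (at t)"
    using t by (auto intro!: derivative_eq_intros)
  ultimately show "\<exists>d. ((\<lambda>t. t powr a + c * t powr b) has_real_derivative d) (at t) \<and> d \<le> 0"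
    by auto
qed (use xy in simp)

lemma Phi'_monotone:
  assumes N: "N \<ge> 2" and p: "p > 1" and xy: "0 < x" "x \<le> y" "y \<le> 1"
  shows "p > 2 \<Longrightarrow> Phi' N p y \<le> Phi' N p x" and "p < 2 \<Longrightarrow> Phi' N p x \<le> Phi' N p y"
proof -
  define D where "D = 2 * real N + (p - 2) * (2 * real N - 1)"
  define c where "c = real N - 1"
  define r where "r = r_exp N p"
  define a where "a = - (2 * real N - 1) / D"
  define h where "h t = t powr a + c * t powr (a + r)" for t
  have D: "D > 0" using r_exp_denominator_pos[OF N p] unfolding D_def .
  have c: "c \<ge> 1" using N unfolding c_def by simp
  have r: "r > 0" using r_exp_pos[OF N p] unfolding r_def .
  have r_a: "r - 1 = a * (p - 2)" and a_r: "a + r = 1 / D"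
    using D unfolding r_def r_exp_def a_def D_def by (simp_all add: field_simps)
  have "a + c * (a + r) = - real N / D"
    using D unfolding a_r unfolding a_def c_def by (simp add: field_simps)
  then have h_antimono: "h y \<le> h x"
    unfolding h_def using D N r c xy a_r by (intro powr_add_powr_antimono) auto
  have Phi'_h: "Phi' N p t = (p - 1) * c * r * h t powr (p - 2)" if t: "t > 0" for t
  proof -
    have "h t = t powr a * (1 + c * t powr r)" unfolding h_def using t
      by (simp add: powr_add algebra_simps)
    then have "h t powr (p - 2) = t powr (r - 1) * (1 + c * t powr r) powr (p - 2)"
      using t by (simp add: powr_mult powr_powr r_a)
    then show ?thesis unfolding Phi'_def c_def r_def by simp
  qed
  have h_pos: "h y > 0" using xy c unfolding h_def by (simp add: add_pos_nonneg)
  have K: "(p - 1) * c * r > 0" using p c r by simp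
  show "Phi' N p y \<le> Phi' N p x" if "p > 2"
  proof -
    have "h y powr (p - 2) \<le> h x powr (p - 2)"
      using h_antimono h_pos that by (intro powr_mono2) auto
    then show ?thesis using Phi'_h xy K by (simp add: mult_left_mono)
  qed
  show "Phi' N p x \<le> Phi' N p y" if "p < 2"
  proof -
    have "h x powr (p - 2) \<le> h y powr (p - 2)"
      using h_antimono h_pos that by (intro powr_mono2') auto
    then show ?thesis using Phi'_h xy K by (simp add: mult_left_mono)
  qed
qed

lemma below_tangent_of_antimono_deriv:
  fixes f f' :: "real \<Rightarrow> real"
  assumes cont: "continuous_on {a..b} f"
    and deriv: "\<And>x. a < x \<Longrightarrow> x < b \<Longrightarrow> (f has_real_derivative f' x) (at x)"
    and antimono: "\<And>x y. a < x \<Longrightarrow> x \<le> y \<Longrightarrow> y \<le> b \<Longrightarrow> f' y \<le> f' x"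
    and x: "a \<le> x" "x \<le> b" and c: "a < c" "c \<le> b"
  shows "f x \<le> f c + f' c * (x - c)"
proof -
  have mvt: "\<exists>z. u < z \<and> z < v \<and> f v - f u = (v - u) * f' z" if "a \<le> u" "u < v" "v \<le> b" for u v
  proof -
    have "continuous_on {u..v} f" using that by (intro continuous_on_subset[OF cont]) auto
    moreover have "f differentiable (at z)" if "u < z" "z < v" for z
      using deriv[of z] that \<open>a \<le> u\<close> \<open>v \<le> b\<close> by (auto simp: real_differentiable_def)
    ultimately obtain l z where "u < z" "z < v" "DERIV f z :> l" "f v - f u = (v - u) * l"
      using MVT[OF \<open>u < v\<close>] by blast
    moreover have "l = f' z"
      using DERIV_unique[OF \<open>DERIV f z :> l\<close> deriv] \<open>u < z\<close> \<open>z < v\<close> that by auto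
    ultimately show ?thesis by blast
  qed
  consider "x = c" | "c < x" | "x < c" by linarith
  then show ?thesis
  proof cases
    case 2
    then obtain z where "c < z" "z < x" "f x - f c = (x - c) * f' z" using mvt[of c x] x c by auto
    moreover have "(x - c) * f' z \<le> (x - c) * f' c"
      using antimono[of c z] 2 x c \<open>c < z\<close> \<open>z < x\<close> by (intro mult_left_mono) auto
    ultimately show ?thesis by (simp add: algebra_simps)
  next
    case 3
    then obtain z where "x < z" "z < c" "f c - f x = (c - x) * f' z" using mvt[of x c] x c by auto
    moreover have "(c - x) * f' c \<le> (c - x) * f' z"
      using antimono[of z c] 3 x c \<open>x < z\<close> \<open>z < c\<close> by (intro mult_left_mono) auto
    ultimately show ?thesis by (simp add: algebra_simps)
  qed simp
qed

lemma Phi_below_tangent: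
  assumes "N \<ge> 2" "p > 2" "0 \<le> \<gamma>" "\<gamma> \<le> 1" "0 < G" "G \<le> 1"
  shows "Phi N p \<gamma> \<le> Phi N p G + Phi' N p G * (\<gamma> - G)"
proof (rule below_tangent_of_antimono_deriv[where a = 0 and b = 1])
  show "continuous_on {0..1} (Phi N p)"
    using assms by (intro continuous_on_subset[OF continuous_on_Phi]) auto
qed (use assms has_real_derivative_Phi Phi'_monotone(1) in auto)

lemma Phi_above_tangent:
  assumes "N \<ge> 2" "1 < p" "p < 2" "0 \<le> \<gamma>" "\<gamma> \<le> 1" "0 < G" "G \<le> 1"
  shows "Phi N p G + Phi' N p G * (\<gamma> - G) \<le> Phi N p \<gamma>"
proof -
  have "- Phi N p \<gamma> \<le> - Phi N p G + - Phi' N p G * (\<gamma> - G)"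
  proof (rule below_tangent_of_antimono_deriv[where a = 0 and b = 1 and f = "\<lambda>x. - Phi N p x"])
    show "continuous_on {0..1} (\<lambda>x. - Phi N p x)"
      using assms by (intro continuous_intros continuous_on_subset[OF continuous_on_Phi]) auto
  qed (use assms has_real_derivative_Phi Phi'_monotone(2) in \<open>auto intro: derivative_intros\<close>)
  then show ?thesis by simp
qed

section \<open>The pointwise inequality\<close>

lemma Young_excess_bound:
  assumes N: "N \<ge> 2" and R: "R \<ge> 1"
  shows "((R - 1) / (real N - 1)) powr ((real N - 1) / real N) \<le> R / real N"
proof (cases "R = 1")
  case False
  define z where "z = (R - 1) / (real N - 1)"
  have z: "z > 0" using N R False unfolding z_def by simp
  have "1 powr (1 / real N) * z powr ((real N - 1) / real N)
      \<le> 1 / real N * 1 + (real N - 1) / real N * z"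
    using Youngs_inequality_0[of "1 / real N" "(real N - 1) / real N" 1 z] z N
    by (simp add: field_simps)
  also have "\<dots> = R / real N" using N unfolding z_def by (simp add: field_simps)
  finally show ?thesis unfolding z_def by simp
qed (use N in simp)

lemma gamma_at_threshold:
  assumes N: "N \<ge> 2" and s: "s > 0" and S: "S > 0" and R: "R > 1"
    and SR: "S * R powr (p - 1) = s powr p"
  shows "real N * (s\<^sup>2 * (R - 1) / (real N * (real N - 1) * R)) powr (p / 2) / S
    = ((R - 1) / (real N - 1)) powr (p / 2) * (R / real N) powr (p / 2 - 1)"
proof -
  have lnS: "ln S = p * ln s - (p - 1) * ln R"
    using arg_cong[OF SR, of ln] S R s by (simp add: ln_mult)
  have "real N - 1 > 0" "R - 1 > 0" using N R by auto
  then show ?thesis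
    using N s S R
    by (subst ln_inj_iff[symmetric])
      (simp_all add: ln_mult ln_div ln_realpow lnS, simp add: field_simps)
qed

(* This is where r = r_exp N p comes from: 1 / r = p/2 + (p/2 - 1) (N - 1) / N is exactly the
   exponent that absorbs Young's bound z^((N - 1) / N) <= R / N. *)
lemma root_vs_gamma_at_threshold:
  assumes N: "N \<ge> 2" and p: "p > 1" and s: "s > 0" and S: "S > 0" and R: "R > 1"
    and SR: "S * R powr (p - 1) = s powr p"
  defines "z \<equiv> (R - 1) / (real N - 1)"
    and "\<gamma>\<^sub>0 \<equiv> real N * (s\<^sup>2 * (R - 1) / (real N * (real N - 1) * R)) powr (p / 2) / S"
  shows "p > 2 \<Longrightarrow> z powr (1 / r_exp N p) \<le> \<gamma>\<^sub>0" and "p < 2 \<Longrightarrow> \<gamma>\<^sub>0 \<le> z powr (1 / r_exp N p)"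
proof -
  have root: "z powr (1 / r_exp N p)
      = z powr (p / 2) * (z powr ((real N - 1) / real N)) powr (p / 2 - 1)"
    unfolding inverse_r_exp[OF N p] by (simp add: powr_powr powr_add ac_simps)
  have \<gamma>\<^sub>0: "\<gamma>\<^sub>0 = z powr (p / 2) * (R / real N) powr (p / 2 - 1)"
    unfolding \<gamma>\<^sub>0_def z_def by (simp add: gamma_at_threshold[OF N s S R SR])
  have Young: "z powr ((real N - 1) / real N) \<le> R / real N"
    using Young_excess_bound[OF N] R unfolding z_def by simp
  show "z powr (1 / r_exp N p) \<le> \<gamma>\<^sub>0" if "p > 2"
    unfolding root \<gamma>\<^sub>0 using Young that by (intro mult_left_mono powr_mono2) auto
  show "\<gamma>\<^sub>0 \<le> z powr (1 / r_exp N p)" if "p < 2"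
    unfolding root \<gamma>\<^sub>0 using Young that N R unfolding z_def
    by (intro mult_left_mono powr_mono2') auto
qed

(* As S R^(p - 1) = s^p, the claim amounts to R <= 1 + (N - 1) gamma^r. *)
lemma le_Phi_of_pair_mean_lower_bound:
  assumes N: "N \<ge> 2" and p: "p > 2" and s: "s > 0" and S: "S > 0" and R: "R \<ge> 1"
    and SR: "S * R powr (p - 1) = s powr p"
    and P: "s\<^sup>2 * (R - 1) \<le> real N * (real N - 1) * P * R"
  shows "s powr p \<le> S * Phi N p (real N * P powr (p / 2) / S)"
proof -
  define c where "c = real N - 1"
  define r where "r = r_exp N p"
  define \<gamma> where "\<gamma> = real N * P powr (p / 2) / S"
  have c: "c \<ge> 1" and r: "r > 0" using N p r_exp_pos[OF N] unfolding c_def r_def by auto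
  have "(R - 1) / c \<le> \<gamma> powr r"
  proof (cases "R = 1")
    case False
    then have "R > 1" using R by simp
    have "s\<^sup>2 * (R - 1) / (real N * c * R) \<le> P"
      using P \<open>R > 1\<close> N unfolding c_def by (simp add: divide_le_eq ac_simps)
    then have "real N * (s\<^sup>2 * (R - 1) / (real N * c * R)) powr (p / 2) / S \<le> \<gamma>"
      unfolding \<gamma>_def using S N p \<open>R > 1\<close> c
      by (intro divide_right_mono mult_left_mono powr_mono2) auto
    then have "((R - 1) / c) powr (1 / r) \<le> \<gamma>"
      using root_vs_gamma_at_threshold(1)[OF N _ s S \<open>R > 1\<close> SR] p unfolding c_def r_def by simp
    then have "(((R - 1) / c) powr (1 / r)) powr r \<le> \<gamma> powr r"
      using r by (intro powr_mono2) auto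
    then show ?thesis using r \<open>R > 1\<close> c by (simp add: powr_powr)
  qed simp
  then have "R powr (p - 1) \<le> (1 + c * \<gamma> powr r) powr (p - 1)"
    using c p R by (intro powr_mono2) (auto simp: divide_le_eq algebra_simps)
  then show ?thesis
    using SR S unfolding Phi_def \<gamma>_def c_def r_def by (simp add: mult_left_mono flip: SR)
qed

lemma Phi_le_of_pair_mean_upper_bound:
  assumes N: "N \<ge> 2" and p: "1 < p" "p < 2" and s: "s > 0" and S: "S > 0" and R: "R \<ge> 1"
    and SR: "S * R powr (p - 1) = s powr p" and P: "P \<ge> 0"
    and PR: "real N * (real N - 1) * P * R \<le> s\<^sup>2 * (R - 1)"
  shows "S * Phi N p (real N * P powr (p / 2) / S) \<le> s powr p"
proof -
  define c where "c = real N - 1"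
  define r where "r = r_exp N p"
  define \<gamma> where "\<gamma> = real N * P powr (p / 2) / S"
  have c: "c \<ge> 1" and r: "r > 0" using N p r_exp_pos[OF N] unfolding c_def r_def by auto
  have \<gamma>: "\<gamma> \<ge> 0" unfolding \<gamma>_def using S by simp
  have "\<gamma> powr r \<le> (R - 1) / c"
  proof (cases "P = 0")
    case False
    then have "0 < real N * (real N - 1) * P * R" using N P R by simp
    then have "R > 1" using PR s by (smt (verit) mult_nonneg_nonpos zero_le_power2)
    have "P \<le> s\<^sup>2 * (R - 1) / (real N * c * R)"
      using PR \<open>R > 1\<close> N unfolding c_def by (simp add: le_divide_eq ac_simps)
    then have "\<gamma> \<le> real N * (s\<^sup>2 * (R - 1) / (real N * c * R)) powr (p / 2) / S"
      unfolding \<gamma>_def using S N p P by (intro divide_right_mono mult_left_mono powr_mono2) auto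
    then have "\<gamma> \<le> ((R - 1) / c) powr (1 / r)"
      using root_vs_gamma_at_threshold(2)[OF N _ s S \<open>R > 1\<close> SR] p unfolding c_def r_def by simp
    then have "\<gamma> powr r \<le> (((R - 1) / c) powr (1 / r)) powr r"
      using r \<gamma> by (intro powr_mono2) auto
    then show ?thesis using r \<open>R > 1\<close> c by (simp add: powr_powr)
  qed (use R c in \<open>simp add: \<gamma>_def\<close>)
  then have "(1 + c * \<gamma> powr r) powr (p - 1) \<le> R powr (p - 1)"
    using c p by (intro powr_mono2) (auto simp: le_divide_eq add_nonneg_nonneg algebra_simps)
  then show ?thesis
    using SR S unfolding Phi_def \<gamma>_def c_def r_def by (simp add: mult_left_mono flip: SR)
qed

lemma scaled_sum_squares_le_iff:
  fixes p s S T R :: real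
  assumes p: "p > 1" and s: "s > 0" and S: "S > 0" and T: "T \<ge> 0" and R: "R \<ge> 0"
    and SR: "S * R powr (p - 1) = s powr p"
  shows "T * R \<le> s\<^sup>2 \<longleftrightarrow> T powr (p - 1) \<le> s powr (p - 2) * S"
    and "s\<^sup>2 \<le> T * R \<longleftrightarrow> s powr (p - 2) * S \<le> T powr (p - 1)"
proof -
  have mono: "x \<le> y \<longleftrightarrow> x powr (p - 1) * S \<le> y powr (p - 1) * S" if "x \<ge> 0" "y \<ge> 0" for x y
  proof -
    have "x \<le> y \<longleftrightarrow> x powr (p - 1) \<le> y powr (p - 1)"
      using that p by (meson not_le powr_less_mono2 powr_mono2 less_imp_le diff_gt_0_iff_gt)
    with S show ?thesis by simp
  qed
  have TR: "(T * R) powr (p - 1) * S = T powr (p - 1) * s powr p"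
    using T R by (simp add: powr_mult flip: SR)
  have s2: "(s\<^sup>2) powr (p - 1) * S = (s powr (p - 2) * S) * s powr p"
    using s by (simp add: powr_powr algebra_simps flip: powr_add powr_numeral)
  show "T * R \<le> s\<^sup>2 \<longleftrightarrow> T powr (p - 1) \<le> s powr (p - 2) * S"
    using mono[of "T * R" "s\<^sup>2"] T R s unfolding TR s2 by simp
  show "s\<^sup>2 \<le> T * R \<longleftrightarrow> s powr (p - 2) * S \<le> T powr (p - 1)"
    using mono[of "s\<^sup>2" "T * R"] T R s unfolding TR s2 by simp
qed

lemma sum_powr_Phi_bounds:
  fixes a :: "nat \<Rightarrow> real"
  assumes N: "N \<ge> 2" and p: "p > 1" and a: "\<And>i. i \<in> {1..N} \<Longrightarrow> a i \<ge> 0"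
  defines "s \<equiv> \<Sum>i\<in>{1..N}. a i" and "S \<equiv> \<Sum>i\<in>{1..N}. a i powr p"
    and "\<gamma> \<equiv> real N * pair_mean N a powr (p / 2) / (\<Sum>i\<in>{1..N}. a i powr p)"
  shows "p > 2 \<Longrightarrow> s powr p \<le> S * Phi N p \<gamma>" and "p < 2 \<Longrightarrow> S * Phi N p \<gamma> \<le> s powr p"
proof -
  have "S \<ge> 0" unfolding S_def by (simp add: sum_nonneg)
  then consider "S = 0" | "S > 0" by linarith
  then have "(p > 2 \<longrightarrow> s powr p \<le> S * Phi N p \<gamma>) \<and> (p < 2 \<longrightarrow> S * Phi N p \<gamma> \<le> s powr p)"
  proof cases
    case 1
    then have "\<forall>i\<in>{1..N}. a i = 0" unfolding S_def by (subst (asm) sum_nonneg_eq_0_iff) auto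
    then show ?thesis using 1 unfolding s_def by simp
  next
    case 2
    have S_le: "S \<le> s powr p"
      unfolding S_def s_def using a p by (intro sum_powr_le_powr_sum) auto
    then have s: "s > 0" using 2 s_def a by (smt (verit) powr_0 sum_nonneg)
    define R where "R = (s powr p / S) powr (1 / (p - 1))"
    define T where "T = (\<Sum>i\<in>{1..N}. (a i)\<^sup>2)"
    have SR: "S * R powr (p - 1) = s powr p" unfolding R_def using 2 p by (simp add: powr_powr)
    have R: "R \<ge> 1" unfolding R_def using S_le 2 p by (intro ge_one_powr_ge_zero) auto
    have T: "T \<ge> 0" unfolding T_def by (simp add: sum_nonneg)
    have P: "pair_mean N a \<ge> 0" using a by (rule pair_mean_nonneg)
    note TR_iff = scaled_sum_squares_le_iff[OF p s 2 T _ SR]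
    have NP: "real N * (real N - 1) * pair_mean N a = s\<^sup>2 - T"
      using square_sum_eq_pair_mean[of a N] unfolding s_def T_def by simp
    show ?thesis
    proof (intro conjI impI)
      assume "p > 2"
      then have "T * R \<le> s\<^sup>2"
        using TR_iff(1) R sum_squares_powr_le_interpolation[of "{1..N}" a p] a
        unfolding T_def s_def S_def by auto
      then have "s\<^sup>2 * (R - 1) \<le> real N * (real N - 1) * pair_mean N a * R"
        unfolding NP by (simp add: algebra_simps)
      then show "s powr p \<le> S * Phi N p \<gamma>"
        using le_Phi_of_pair_mean_lower_bound[OF N \<open>p > 2\<close> s 2 R SR] unfolding \<gamma>_def S_def by blast
    next
      assume "p < 2"
      then have "s\<^sup>2 \<le> T * R"
        using TR_iff(2) R sum_powr_le_interpolation[of "{1..N}" a p] a p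
        unfolding T_def s_def S_def by auto
      then have "real N * (real N - 1) * pair_mean N a * R \<le> s\<^sup>2 * (R - 1)"
        unfolding NP by (simp add: algebra_simps)
      then show "S * Phi N p \<gamma> \<le> s powr p"
        using Phi_le_of_pair_mean_upper_bound[OF N p \<open>p < 2\<close> s 2 R SR P] unfolding \<gamma>_def S_def
        by blast
    qed
  qed
  then show "p > 2 \<Longrightarrow> s powr p \<le> S * Phi N p \<gamma>" and "p < 2 \<Longrightarrow> S * Phi N p \<gamma> \<le> s powr p"
    by auto
qed

section \<open>Integration\<close>

(* The tangent at the mean G is only available for G > 0; for G = 0 the function g vanishes
   almost everywhere instead. *)
lemma weighted_Jensen_of_tangents:
  fixes S g u :: "'a \<Rightarrow> real" and \<psi> \<psi>' :: "real \<Rightarrow> real"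
  assumes tangent: "\<And>\<gamma> G. 0 \<le> \<gamma> \<Longrightarrow> \<gamma> \<le> 1 \<Longrightarrow> 0 < G \<Longrightarrow> G \<le> 1 \<Longrightarrow> \<psi> \<gamma> \<le> \<psi> G + \<psi>' G * (\<gamma> - G)"
    and int: "integrable M S" "integrable M g" "integrable M u"
    and g: "\<And>x. x \<in> space M \<Longrightarrow> 0 \<le> g x \<and> g x \<le> S x"
    and u: "\<And>x. x \<in> space M \<Longrightarrow> u x \<le> S x * \<psi> (g x / S x)"
    and pos: "0 < integral\<^sup>L M S"
  shows "integral\<^sup>L M u \<le> \<psi> (integral\<^sup>L M g / integral\<^sup>L M S) * integral\<^sup>L M S"
proof -
  define G where "G = integral\<^sup>L M g / integral\<^sup>L M S"
  have "0 \<le> integral\<^sup>L M g" "integral\<^sup>L M g \<le> integral\<^sup>L M S"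
    using g by (auto intro!: integral_nonneg_AE integral_mono int)
  then have G: "0 \<le> G" "G \<le> 1" unfolding G_def using pos by auto
  have "\<exists>d. AE x in M. u x \<le> \<psi> G * S x + d * (g x - G * S x)"
  proof (cases "G = 0")
    case True
    then have "integral\<^sup>L M g = 0" unfolding G_def using pos by simp
    then have "AE x in M. g x = 0" using g
      by (subst (asm) integral_nonneg_eq_0_iff_AE) (auto intro: int)
    with AE_space have "AE x in M. u x \<le> \<psi> G * S x + 0 * (g x - G * S x)"
      by eventually_elim (auto dest!: u simp: True mult.commute)
    then show ?thesis ..
  next
    case False
    have "u x \<le> \<psi> G * S x + \<psi>' G * (g x - G * S x)" if x: "x \<in> space M" for x
    proof (cases "S x = 0")
      case True
      then have "g x = 0" using g[OF x] by simp
      then show ?thesis using u[OF x] True by simp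
    next
      case False
      then have "S x > 0" using g[OF x] by simp
      have "u x \<le> S x * \<psi> (g x / S x)" using u[OF x] .
      also have "\<dots> \<le> S x * (\<psi> G + \<psi>' G * (g x / S x - G))"
        using tangent[of "g x / S x" G] g[OF x] \<open>S x > 0\<close> G \<open>G \<noteq> 0\<close>
        by (intro mult_left_mono) auto
      also have "\<dots> = \<psi> G * S x + \<psi>' G * (g x - G * S x)"
        using \<open>S x > 0\<close> by (simp add: field_simps)
      finally show ?thesis .
    qed
    then show ?thesis by blast
  qed
  then obtain d where "AE x in M. u x \<le> \<psi> G * S x + d * (g x - G * S x)" ..
  then have "integral\<^sup>L M u \<le> (\<integral>x. \<psi> G * S x + d * (g x - G * S x) \<partial>M)"
    by (intro integral_mono_AE) (use int in auto)
  also have "\<dots> = \<psi> G * integral\<^sup>L M S + d * (integral\<^sup>L M g - G * integral\<^sup>L M S)"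
    using int by simp
  also have "\<dots> = \<psi> G * integral\<^sup>L M S" unfolding G_def using pos by simp
  finally show ?thesis unfolding G_def .
qed

lemma qpow_norm_eq_integral:
  assumes "integrable M (\<lambda>x. h x powr q)" and "\<And>x. x \<in> space M \<Longrightarrow> h x \<ge> 0"
  shows "qpow_norm M q h = ennreal (\<integral>x. h x powr q \<partial>M)"
proof -
  have "qpow_norm M q h = (\<integral>\<^sup>+x. ennreal (h x powr q) \<partial>M)"
    unfolding qpow_norm_def using assms(2) by (intro nn_integral_cong) simp
  also have "\<dots> = ennreal (\<integral>x. h x powr q \<partial>M)" using assms(1) by (intro nn_integral_eq_integral) auto
  finally show ?thesis .
qed

lemma sum_qpow_norm_eq_nn_integral:
  fixes f :: "'i \<Rightarrow> 'a \<Rightarrow> real" and p :: real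
  assumes meas: "\<And>j. j \<in> J \<Longrightarrow> f j \<in> borel_measurable M"
    and nonneg: "\<And>j x. j \<in> J \<Longrightarrow> x \<in> space M \<Longrightarrow> f j x \<ge> 0"
  shows "(\<Sum>j\<in>J. qpow_norm M p (f j)) = (\<integral>\<^sup>+x. ennreal (\<Sum>j\<in>J. f j x powr p) \<partial>M)"
proof -
  have "(\<Sum>j\<in>J. qpow_norm M p (f j)) = (\<Sum>j\<in>J. \<integral>\<^sup>+x. ennreal (f j x powr p) \<partial>M)"
    unfolding qpow_norm_def using nonneg by (intro sum.cong nn_integral_cong) auto
  also have "\<dots> = (\<integral>\<^sup>+x. ennreal (\<Sum>j\<in>J. f j x powr p) \<partial>M)"
    using meas
    by (subst nn_integral_sum[symmetric]) (auto intro!: nn_integral_cong simp: sum_ennreal)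
  finally show ?thesis .
qed

lemma integrable_powr_sum:
  fixes f :: "'i \<Rightarrow> 'a \<Rightarrow> real" and p :: real
  assumes "finite J" and p: "p > 1"
    and meas: "\<And>j. j \<in> J \<Longrightarrow> f j \<in> borel_measurable M"
    and nonneg: "\<And>j x. j \<in> J \<Longrightarrow> x \<in> space M \<Longrightarrow> f j x \<ge> 0"
    and int: "integrable M (\<lambda>x. \<Sum>j\<in>J. f j x powr p)"
  shows "integrable M (\<lambda>x. (\<Sum>j\<in>J. f j x) powr p)"
proof (rule Bochner_Integration.integrable_bound)
  show "integrable M (\<lambda>x. real (card J) powr (p - 1) * (\<Sum>j\<in>J. f j x powr p))"
    by (rule integrable_mult_right[OF int])
  show "AE x in M. norm ((\<Sum>j\<in>J. f j x) powr p)
      \<le> norm (real (card J) powr (p - 1) * (\<Sum>j\<in>J. f j x powr p))"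
    using powr_sum_le_card_powr_sum[OF \<open>finite J\<close> _ p] nonneg
    by (intro AE_I2) (auto simp: sum_nonneg)
qed (use meas in measurable)

lemma integrable_pair_mean_powr:
  assumes N: "N \<ge> 2" and p: "p > 1"
    and meas: "\<And>j. j \<in> {1..N} \<Longrightarrow> f j \<in> borel_measurable M"
    and nonneg: "\<And>j x. j \<in> {1..N} \<Longrightarrow> x \<in> space M \<Longrightarrow> f j x \<ge> 0"
    and int: "integrable M (\<lambda>x. \<Sum>j\<in>{1..N}. f j x powr p)"
  shows "integrable M (\<lambda>x. pair_mean N (\<lambda>j. f j x) powr (p / 2))"
proof (rule Bochner_Integration.integrable_bound[OF int])
  show "(\<lambda>x. pair_mean N (\<lambda>j. f j x) powr (p / 2)) \<in> borel_measurable M"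
    unfolding pair_mean_def using meas by measurable
  have "norm (pair_mean N (\<lambda>j. f j x) powr (p / 2)) \<le> norm (\<Sum>j\<in>{1..N}. f j x powr p)"
    if "x \<in> space M" for x
  proof -
    have "1 * pair_mean N (\<lambda>j. f j x) powr (p / 2) \<le> real N * pair_mean N (\<lambda>j. f j x) powr (p / 2)"
      using N by (intro mult_right_mono) auto
    also have "\<dots> \<le> (\<Sum>j\<in>{1..N}. f j x powr p)"
      using pair_mean_powr_le_sum_powr[OF N _ p, of "\<lambda>j. f j x"] nonneg that by simp
    finally show ?thesis by (simp add: sum_nonneg)
  qed
  then show "AE x in M. norm (pair_mean N (\<lambda>j. f j x) powr (p / 2))
      \<le> norm (\<Sum>j\<in>{1..N}. f j x powr p)"
    by (intro AE_I2)
qed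

lemma integral_powr_sum_Phi_bounds:
  fixes M :: "'a measure" and f :: "nat \<Rightarrow> 'a \<Rightarrow> real" and N :: nat and p :: real
  defines "S \<equiv> \<lambda>x. \<Sum>j\<in>{1..N}. f j x powr p"
    and "g \<equiv> \<lambda>x. real N * pair_mean N (\<lambda>j. f j x) powr (p / 2)"
    and "u \<equiv> \<lambda>x. (\<Sum>j\<in>{1..N}. f j x) powr p"
  assumes N: "N \<ge> 2" and p: "p > 1"
    and nonneg: "\<And>j x. j \<in> {1..N} \<Longrightarrow> x \<in> space M \<Longrightarrow> f j x \<ge> 0"
    and int: "integrable M S" "integrable M g" "integrable M u" and pos: "0 < integral\<^sup>L M S"
  shows "p > 2 \<Longrightarrow> integral\<^sup>L M u \<le> Phi N p (integral\<^sup>L M g / integral\<^sup>L M S) * integral\<^sup>L M S"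
    and "p < 2 \<Longrightarrow> Phi N p (integral\<^sup>L M g / integral\<^sup>L M S) * integral\<^sup>L M S \<le> integral\<^sup>L M u"
proof -
  have g: "0 \<le> g x \<and> g x \<le> S x" if "x \<in> space M" for x
    unfolding g_def S_def using pair_mean_powr_le_sum_powr[OF N _ p] nonneg that by auto
  show "integral\<^sup>L M u \<le> Phi N p (integral\<^sup>L M g / integral\<^sup>L M S) * integral\<^sup>L M S" if "p > 2"
  proof (rule weighted_Jensen_of_tangents[OF Phi_below_tangent[OF N that] int g _ pos])
    show "u x \<le> S x * Phi N p (g x / S x)" if "x \<in> space M" for x
      using sum_powr_Phi_bounds(1)[OF N p, of "\<lambda>j. f j x"] nonneg that \<open>p > 2\<close>
      unfolding u_def S_def g_def by auto
  qed
  show "Phi N p (integral\<^sup>L M g / integral\<^sup>L M S) * integral\<^sup>L M S \<le> integral\<^sup>L M u" if "p < 2"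
  proof -
    have "(\<integral>x. - u x \<partial>M) \<le> - Phi N p (integral\<^sup>L M g / integral\<^sup>L M S) * integral\<^sup>L M S"
    proof (rule weighted_Jensen_of_tangents
        [where \<psi> = "\<lambda>\<gamma>. - Phi N p \<gamma>" and \<psi>' = "\<lambda>\<gamma>. - Phi' N p \<gamma>"])
      show "- Phi N p \<gamma> \<le> - Phi N p G + - Phi' N p G * (\<gamma> - G)"
        if "0 \<le> \<gamma>" "\<gamma> \<le> 1" "0 < G" "G \<le> 1" for \<gamma> G
        using Phi_above_tangent[OF N p \<open>p < 2\<close> that] by simp
      show "- u x \<le> S x * - Phi N p (g x / S x)" if "x \<in> space M" for x
        using sum_powr_Phi_bounds(2)[OF N p, of "\<lambda>j. f j x"] nonneg that \<open>p < 2\<close>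
        unfolding u_def S_def g_def by auto
    qed (use int g pos in auto)
    then show ?thesis by simp
  qed
qed

lemma qpow_norm_sum_Phi_bounds:
  fixes M :: "'a measure" and f :: "nat \<Rightarrow> 'a \<Rightarrow> real"
  assumes N: "N \<ge> 2" and p: "p > 1"
    and meas: "\<And>j. j \<in> {1..N} \<Longrightarrow> f j \<in> borel_measurable M"
    and nonneg: "\<And>j x. j \<in> {1..N} \<Longrightarrow> x \<in> space M \<Longrightarrow> f j x \<ge> 0"
    and pos: "0 < (\<Sum>j\<in>{1..N}. qpow_norm M p (f j))"
    and fin: "(\<Sum>j\<in>{1..N}. qpow_norm M p (f j)) < \<infinity>"
  defines "B \<equiv> ennreal (Phi N p (Gamma_p M p N f)) * (\<Sum>j\<in>{1..N}. qpow_norm M p (f j))"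
  shows "p > 2 \<Longrightarrow> qpow_norm M p (\<lambda>x. \<Sum>j\<in>{1..N}. f j x) \<le> B"
    and "p < 2 \<Longrightarrow> B \<le> qpow_norm M p (\<lambda>x. \<Sum>j\<in>{1..N}. f j x)"
proof -
  define S where "S = (\<lambda>x. \<Sum>j\<in>{1..N}. f j x powr p)"
  define g where "g = (\<lambda>x. real N * pair_mean N (\<lambda>j. f j x) powr (p / 2))"
  define u where "u = (\<lambda>x. (\<Sum>j\<in>{1..N}. f j x) powr p)"
  have sum_eq_nn: "(\<Sum>j\<in>{1..N}. qpow_norm M p (f j)) = (\<integral>\<^sup>+x. ennreal (S x) \<partial>M)"
    using sum_qpow_norm_eq_nn_integral[where J = "{1..N}" and f = f and M = M and p = p] meas nonneg
    unfolding S_def by blast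
  have S_int: "integrable M S"
    using sum_eq_nn fin meas unfolding S_def by (intro integrableI_nonneg) (auto simp: sum_nonneg)
  have P_int: "integrable M (\<lambda>x. pair_mean N (\<lambda>j. f j x) powr (p / 2))"
    using integrable_pair_mean_powr[of N p f M] N p meas nonneg S_int unfolding S_def by blast
  then have g_int: "integrable M g" unfolding g_def by simp
  have u_int: "integrable M u"
    using integrable_powr_sum[of "{1..N}" p f M] p meas nonneg S_int unfolding S_def u_def by blast
  have sum_eq: "(\<Sum>j\<in>{1..N}. qpow_norm M p (f j)) = ennreal (integral\<^sup>L M S)"
    unfolding sum_eq_nn by (intro nn_integral_eq_integral S_int) (auto simp: S_def sum_nonneg)
  have lhs_eq: "qpow_norm M p (\<lambda>x. \<Sum>j\<in>{1..N}. f j x) = ennreal (integral\<^sup>L M u)"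
    using u_int nonneg unfolding u_def by (intro qpow_norm_eq_integral) (auto intro: sum_nonneg)
  have S_pos: "integral\<^sup>L M S > 0" using pos unfolding sum_eq by simp
  have "enn2real (qpow_norm M (p / 2) (\<lambda>x. pair_mean N (\<lambda>j. f j x)))
      = (\<integral>x. pair_mean N (\<lambda>j. f j x) powr (p / 2) \<partial>M)"
    using qpow_norm_eq_integral[OF P_int] pair_mean_nonneg nonneg by (simp add: integral_nonneg_AE)
  then have Gamma: "Gamma_p M p N f = integral\<^sup>L M g / integral\<^sup>L M S"
    unfolding Gamma_p_def sum_eq g_def using S_pos N by (simp add: pair_mean_def integral_nonneg_AE)
  have bounds: "p > 2 \<Longrightarrow> integral\<^sup>L M u \<le> Phi N p (Gamma_p M p N f) * integral\<^sup>L M S"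
    "p < 2 \<Longrightarrow> Phi N p (Gamma_p M p N f) * integral\<^sup>L M S \<le> integral\<^sup>L M u"
    using integral_powr_sum_Phi_bounds[where M = M and f = f and N = N and p = p]
      N p nonneg S_int g_int u_int S_pos
    unfolding Gamma S_def g_def u_def by blast+
  show "qpow_norm M p (\<lambda>x. \<Sum>j\<in>{1..N}. f j x) \<le> B" if "p > 2"
    using bounds(1)[OF that] S_pos unfolding B_def lhs_eq sum_eq
    by (simp add: ennreal_leI flip: ennreal_mult'')
  show "B \<le> qpow_norm M p (\<lambda>x. \<Sum>j\<in>{1..N}. f j x)" if "p < 2"
    using bounds(2)[OF that] S_pos unfolding B_def lhs_eq sum_eq
    by (simp add: ennreal_leI flip: ennreal_mult'')
qed

theorem mainTheorem1:
  fixes M :: "'a measure" and N :: nat and f :: "nat \<Rightarrow> 'a \<Rightarrow> real" and p :: real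
  assumes N2: "N \<ge> 2"
    and meas: "\<And>j. j \<in> {1..N} \<Longrightarrow> f j \<in> borel_measurable M"
    and nonneg: "\<And>j x. j \<in> {1..N} \<Longrightarrow> x \<in> space M \<Longrightarrow> f j x \<ge> 0"
    and pos: "0 < (\<Sum>j\<in>{1..N}. qpow_norm M p (f j))"
    and fin: "(\<Sum>j\<in>{1..N}. qpow_norm M p (f j)) < \<infinity>"
  shows "(2 < p \<longrightarrow>
            qpow_norm M p (\<lambda>x. \<Sum>j\<in>{1..N}. f j x)
              \<le> ennreal ((1 + (real N - 1) * Gamma_p M p N f powr r_exp N p) powr (p - 1))
                  * (\<Sum>j\<in>{1..N}. qpow_norm M p (f j)))
       \<and> (1 < p \<and> p < 2 \<longrightarrow>
            qpow_norm M p (\<lambda>x. \<Sum>j\<in>{1..N}. f j x)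
              \<ge> ennreal ((1 + (real N - 1) * Gamma_p M p N f powr r_exp N p) powr (p - 1))
                  * (\<Sum>j\<in>{1..N}. qpow_norm M p (f j)))"
proof (intro conjI impI)
  assume "2 < p"
  moreover from this have "1 < p" by simp
  ultimately show "qpow_norm M p (\<lambda>x. \<Sum>j\<in>{1..N}. f j x)
      \<le> ennreal ((1 + (real N - 1) * Gamma_p M p N f powr r_exp N p) powr (p - 1))
        * (\<Sum>j\<in>{1..N}. qpow_norm M p (f j))"
    using qpow_norm_sum_Phi_bounds(1)[OF N2 _ meas nonneg pos fin] unfolding Phi_def by blast
next
  assume "1 < p \<and> p < 2"
  then show "ennreal ((1 + (real N - 1) * Gamma_p M p N f powr r_exp N p) powr (p - 1))
        * (\<Sum>j\<in>{1..N}. qpow_norm M p (f j)) \<le> qpow_norm M p (\<lambda>x. \<Sum>j\<in>{1..N}. f j x)"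
    using qpow_norm_sum_Phi_bounds(2)[OF N2 _ meas nonneg pos fin] unfolding Phi_def by blast
qed

end
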